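(* Let $d=d(n)$, and let $X=X(n)\in\mathbb{R}^d$ and $Y=Y(n)\in\mathbb{R}^d$ be sequences of random vectors defined on a common probability space. Let $a_n,b_n$ be sequences of real constants and let $F$ be a continuous cdf. Suppose that for every $x\in\mathbb{R}$ with $0<F(x)<1$: (1) ${\sf Pr}(\max_{i\in[d]}Y_i\le a_n+b_nx)\to F(x)$ as $n\to\infty$; and (2) for every fixed $\varepsilon>0$, $\sum_{i=1}^d{\sf Pr}(|X_i-Y_i|>\varepsilon b_n)=o(1)$. Then ${\sf Pr}(\max_{i\in[d]}X_i\le a_n+b_nx)\to F(x)$ for all $x\in\mathbb{R}$. *)

theory Defs
  imports "HOL-Probability.Probability"
begin

definition is_cdf :: "(real \<Rightarrow> real) \<Rightarrow> bool" where
  "is_cdf F \<longleftrightarrow> mono F \<and> (\<forall>x. continuous (at_right x) F)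
     \<and> (F \<longlongrightarrow> 0) at_bot \<and> (F \<longlongrightarrow> 1) at_top"

end

theory Submission
  imports Defs
begin

text \<open>If all \<open>X\<^sub>i \<le> a\<^sub>n + b\<^sub>n x\<close>, then either all \<open>Y\<^sub>i \<le> a\<^sub>n + b\<^sub>n (x + \<epsilon>)\<close> or some
  \<open>\<bar>X\<^sub>i - Y\<^sub>i\<bar> > \<epsilon> b\<^sub>n\<close>; exchanging \<open>X\<close> and \<open>Y\<close> gives the matching bound at \<open>x - \<epsilon>\<close>. By the
  union bound, the distribution function of \<open>max X\<^sub>i\<close> at \<open>x\<close> is thus squeezed between
  those of \<open>max Y\<^sub>i\<close> at \<open>x - \<epsilon>\<close> and \<open>x + \<epsilon>\<close>, up to errors that vanish for each fixed
  \<open>\<epsilon>\<close>. Since \<open>F\<close> is continuous and attains every value in \<open>(0, 1)\<close>, the shifts can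
  be chosen at points where the convergence of the \<open>Y\<close>-probabilities is known and
  \<open>F\<close> is as close to \<open>F x\<close> as desired.\<close>

lemma is_cdf_nonneg:
  assumes "is_cdf F"
  shows "0 \<le> F x"
proof (rule tendsto_upperbound)
  show "(F \<longlongrightarrow> 0) at_bot" using assms by (simp add: is_cdf_def)
  show "\<forall>\<^sub>F y in at_bot. F y \<le> F x"
    using assms by (auto simp: is_cdf_def eventually_at_bot_linorder intro: monoD)
qed simp

lemma is_cdf_le_1:
  assumes "is_cdf F"
  shows "F x \<le> 1"
proof (rule tendsto_lowerbound)
  show "(F \<longlongrightarrow> 1) at_top" using assms by (simp add: is_cdf_def)
  show "\<forall>\<^sub>F y in at_top. F x \<le> F y"
    using assms by (auto simp: is_cdf_def eventually_at_top_linorder intro: monoD)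
qed simp

lemma is_cdf_continuous_attains:
  assumes "is_cdf F" "continuous_on UNIV F" "0 < t" "t < 1"
  obtains z where "F z = t"
proof -
  have F: "mono F" "(F \<longlongrightarrow> 0) at_bot" "(F \<longlongrightarrow> 1) at_top"
    using assms(1) by (auto simp: is_cdf_def)
  obtain u where u: "F u < t"
    using order_tendstoD(2)[OF F(2) \<open>0 < t\<close>] by (auto simp: eventually_at_bot_linorder)
  obtain w where w: "t < F w"
    using order_tendstoD(1)[OF F(3) \<open>t < 1\<close>] by (auto simp: eventually_at_top_linorder)
  have "u \<le> w"
    using u w monoD[OF F(1), of w u] by (cases "u \<le> w") auto
  then show ?thesis
    using IVT'[of F u t w] u w continuous_on_subset[OF assms(2)] that by auto
qed

context prob_space
begin

lemma prob_all_le_shift: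
  fixes X Y :: "'i \<Rightarrow> 'a \<Rightarrow> real"
  assumes "finite I"
    and X: "\<And>i. i \<in> I \<Longrightarrow> X i \<in> borel_measurable M"
    and Y: "\<And>i. i \<in> I \<Longrightarrow> Y i \<in> borel_measurable M"
  shows "prob {\<omega> \<in> space M. \<forall>i\<in>I. X i \<omega> \<le> c}
    \<le> prob {\<omega> \<in> space M. \<forall>i\<in>I. Y i \<omega> \<le> c + \<delta>}
      + (\<Sum>i\<in>I. prob {\<omega> \<in> space M. \<bar>X i \<omega> - Y i \<omega>\<bar> > \<delta>})"
proof -
  define far where "far i = {\<omega> \<in> space M. \<bar>X i \<omega> - Y i \<omega>\<bar> > \<delta>}" for i
  define below_Y where "below_Y = {\<omega> \<in> space M. \<forall>i\<in>I. Y i \<omega> \<le> c + \<delta>}"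
  have far_sets: "far i \<in> events" if "i \<in> I" for i
    using X[OF that] Y[OF that] unfolding far_def by measurable
  have below_Y_sets: "below_Y \<in> events"
    unfolding below_Y_def
  proof (rule sets.sets_Collect_finite_All[OF _ \<open>finite I\<close>])
    fix i assume "i \<in> I"
    with Y show "{\<omega> \<in> space M. Y i \<omega> \<le> c + \<delta>} \<in> events" by measurable
  qed
  have "{\<omega> \<in> space M. \<forall>i\<in>I. X i \<omega> \<le> c} \<subseteq> below_Y \<union> (\<Union>i\<in>I. far i)"
    unfolding below_Y_def far_def by (force simp: abs_le_iff)
  then have "prob {\<omega> \<in> space M. \<forall>i\<in>I. X i \<omega> \<le> c} \<le> prob (below_Y \<union> (\<Union>i\<in>I. far i))"
    using below_Y_sets far_sets \<open>finite I\<close> by (intro finite_measure_mono) auto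
  also have "\<dots> \<le> prob below_Y + prob (\<Union>i\<in>I. far i)"
    using below_Y_sets far_sets \<open>finite I\<close> by (intro measure_Un_le) auto
  also have "\<dots> \<le> prob below_Y + (\<Sum>i\<in>I. prob (far i))"
    using far_sets \<open>finite I\<close> by (simp add: measure_UNION_le)
  finally show ?thesis
    unfolding below_Y_def far_def .
qed

end

lemma eventually_less_of_upper_shift:
  fixes P :: "nat \<Rightarrow> real" and Q S :: "nat \<Rightarrow> real \<Rightarrow> real"
  assumes cdf: "is_cdf F" and cont: "continuous_on UNIV F"
    and Q: "\<And>z. 0 < F z \<Longrightarrow> F z < 1 \<Longrightarrow> (\<lambda>n. Q n z) \<longlonglongrightarrow> F z"
    and S: "\<And>\<epsilon>. \<epsilon> > 0 \<Longrightarrow> (\<lambda>n. S n \<epsilon>) \<longlonglongrightarrow> 0"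
    and upper: "\<And>n \<epsilon>. \<epsilon> > 0 \<Longrightarrow> P n \<le> Q n (x + \<epsilon>) + S n \<epsilon>"
    and P_le_1: "\<And>n. P n \<le> 1"
    and "F x < c"
  shows "\<forall>\<^sub>F n in sequentially. P n < c"
proof (cases "1 < c")
  case True
  then show ?thesis using P_le_1 by (intro always_eventually allI) (rule order.strict_trans1)
next
  case False
  define t where "t = (F x + c) / 2"
  have t: "F x < t" "t < c" "0 < t" "t < 1"
    using \<open>F x < c\<close> False is_cdf_nonneg[OF cdf, of x] unfolding t_def by auto
  obtain z where z: "F z = t"
    using is_cdf_continuous_attains[OF cdf cont \<open>0 < t\<close> \<open>t < 1\<close>] .
  have "x < z"
    using z t(1) monoD[of F z x] cdf by (cases "x < z") (auto simp: is_cdf_def)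
  have "(\<lambda>n. Q n z + S n (z - x)) \<longlonglongrightarrow> F z + 0"
    using z t \<open>x < z\<close> by (intro tendsto_add Q S) auto
  then have "\<forall>\<^sub>F n in sequentially. Q n z + S n (z - x) < c"
    using z t(2) by (intro order_tendstoD(2)) auto
  moreover have "P n \<le> Q n z + S n (z - x)" for n
    using upper[of "z - x" n] \<open>x < z\<close> by simp
  ultimately show ?thesis
    by (metis (mono_tags, lifting) eventually_mono order.strict_trans1)
qed

lemma eventually_greater_of_lower_shift:
  fixes P :: "nat \<Rightarrow> real" and Q S :: "nat \<Rightarrow> real \<Rightarrow> real"
  assumes cdf: "is_cdf F" and cont: "continuous_on UNIV F"
    and Q: "\<And>z. 0 < F z \<Longrightarrow> F z < 1 \<Longrightarrow> (\<lambda>n. Q n z) \<longlonglongrightarrow> F z"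
    and S: "\<And>\<epsilon>. \<epsilon> > 0 \<Longrightarrow> (\<lambda>n. S n \<epsilon>) \<longlonglongrightarrow> 0"
    and lower: "\<And>n \<epsilon>. \<epsilon> > 0 \<Longrightarrow> Q n (x - \<epsilon>) \<le> P n + S n \<epsilon>"
    and P_nonneg: "\<And>n. 0 \<le> P n"
    and "c < F x"
  shows "\<forall>\<^sub>F n in sequentially. c < P n"
proof (cases "c < 0")
  case True
  then show ?thesis using P_nonneg by (intro always_eventually allI) (rule order.strict_trans2)
next
  case False
  define t where "t = (F x + c) / 2"
  have t: "t < F x" "c < t" "0 < t" "t < 1"
    using \<open>c < F x\<close> False is_cdf_le_1[OF cdf, of x] unfolding t_def by auto
  obtain z where z: "F z = t"
    using is_cdf_continuous_attains[OF cdf cont \<open>0 < t\<close> \<open>t < 1\<close>] .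
  have "z < x"
    using z t(1) monoD[of F x z] cdf by (cases "z < x") (auto simp: is_cdf_def)
  have "(\<lambda>n. Q n z - S n (x - z)) \<longlonglongrightarrow> F z - 0"
    using z t \<open>z < x\<close> by (intro tendsto_diff Q S) auto
  then have "\<forall>\<^sub>F n in sequentially. c < Q n z - S n (x - z)"
    using z t(2) by (intro order_tendstoD(1)) auto
  moreover have "Q n z - S n (x - z) \<le> P n" for n
    using lower[of "x - z" n] \<open>z < x\<close> by simp
  ultimately show ?thesis
    by (metis (mono_tags, lifting) eventually_mono order.strict_trans2)
qed

lemma tendsto_cdf_of_shift_sandwich:
  fixes P :: "nat \<Rightarrow> real" and Q S :: "nat \<Rightarrow> real \<Rightarrow> real"
  assumes "is_cdf F" "continuous_on UNIV F"
    and "\<And>z. 0 < F z \<Longrightarrow> F z < 1 \<Longrightarrow> (\<lambda>n. Q n z) \<longlonglongrightarrow> F z"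
    and "\<And>\<epsilon>. \<epsilon> > 0 \<Longrightarrow> (\<lambda>n. S n \<epsilon>) \<longlonglongrightarrow> 0"
    and "\<And>n \<epsilon>. \<epsilon> > 0 \<Longrightarrow> P n \<le> Q n (x + \<epsilon>) + S n \<epsilon>"
    and "\<And>n \<epsilon>. \<epsilon> > 0 \<Longrightarrow> Q n (x - \<epsilon>) \<le> P n + S n \<epsilon>"
    and "\<And>n. 0 \<le> P n" "\<And>n. P n \<le> 1"
  shows "P \<longlonglongrightarrow> F x"
proof (rule order_tendstoI)
  show "\<forall>\<^sub>F n in sequentially. P n < c" if "F x < c" for c
    using assms(1-5,8) that by (rule eventually_less_of_upper_shift)
  show "\<forall>\<^sub>F n in sequentially. c < P n" if "c < F x" for c
    using assms(1-4,6,7) that by (rule eventually_greater_of_lower_shift)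
qed

theorem lemma4:
  fixes M :: "'a measure"
    and d :: "nat \<Rightarrow> nat"
    and X Y :: "nat \<Rightarrow> nat \<Rightarrow> 'a \<Rightarrow> real"
    and a b :: "nat \<Rightarrow> real"
    and F :: "real \<Rightarrow> real"
  assumes "prob_space M"
    and X_meas: "\<And>n i. i \<in> {1..d n} \<Longrightarrow> X n i \<in> borel_measurable M"
    and Y_meas: "\<And>n i. i \<in> {1..d n} \<Longrightarrow> Y n i \<in> borel_measurable M"
    and "is_cdf F" and "continuous_on UNIV F"
    and conv_Y: "\<And>x. 0 < F x \<Longrightarrow> F x < 1 \<Longrightarrow>
       (\<lambda>n. measure M {\<omega> \<in> space M. \<forall>i\<in>{1..d n}. Y n i \<omega> \<le> a n + b n * x})
         \<longlonglongrightarrow> F x"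
    and close: "\<And>x \<epsilon>. 0 < F x \<Longrightarrow> F x < 1 \<Longrightarrow> \<epsilon> > 0 \<Longrightarrow>
       (\<lambda>n. \<Sum>i\<in>{1..d n}. measure M {\<omega> \<in> space M. \<bar>X n i \<omega> - Y n i \<omega>\<bar> > \<epsilon> * b n})
         \<longlonglongrightarrow> 0"
  shows "\<forall>x. (\<lambda>n. measure M {\<omega> \<in> space M. \<forall>i\<in>{1..d n}. X n i \<omega> \<le> a n + b n * x})
           \<longlonglongrightarrow> F x"
proof
  fix x
  interpret prob_space M by fact
  \<comment> \<open>\<open>close\<close> does not depend on its \<open>x\<close>, but is only granted where \<open>0 < F x < 1\<close>.\<close>
  obtain x\<^sub>0 where x\<^sub>0: "F x\<^sub>0 = 1 / 2"
    using is_cdf_continuous_attains[OF \<open>is_cdf F\<close> \<open>continuous_on UNIV F\<close>, of "1 / 2"] by auto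
  show "(\<lambda>n. prob {\<omega> \<in> space M. \<forall>i\<in>{1..d n}. X n i \<omega> \<le> a n + b n * x}) \<longlonglongrightarrow> F x"
  proof (rule tendsto_cdf_of_shift_sandwich[OF \<open>is_cdf F\<close> \<open>continuous_on UNIV F\<close> conv_Y])
    show "(\<lambda>n. \<Sum>i\<in>{1..d n}. prob {\<omega> \<in> space M. \<bar>X n i \<omega> - Y n i \<omega>\<bar> > \<epsilon> * b n}) \<longlonglongrightarrow> 0"
      if "\<epsilon> > 0" for \<epsilon>
      using close[of x\<^sub>0 \<epsilon>] x\<^sub>0 that by simp
    show "prob {\<omega> \<in> space M. \<forall>i\<in>{1..d n}. X n i \<omega> \<le> a n + b n * x}
      \<le> prob {\<omega> \<in> space M. \<forall>i\<in>{1..d n}. Y n i \<omega> \<le> a n + b n * (x + \<epsilon>)}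
        + (\<Sum>i\<in>{1..d n}. prob {\<omega> \<in> space M. \<bar>X n i \<omega> - Y n i \<omega>\<bar> > \<epsilon> * b n})" for n \<epsilon>
      using prob_all_le_shift[where I = "{1..d n}" and c = "a n + b n * x" and \<delta> = "\<epsilon> * b n",
        OF _ X_meas Y_meas]
      by (simp add: algebra_simps)
    show "prob {\<omega> \<in> space M. \<forall>i\<in>{1..d n}. Y n i \<omega> \<le> a n + b n * (x - \<epsilon>)}
      \<le> prob {\<omega> \<in> space M. \<forall>i\<in>{1..d n}. X n i \<omega> \<le> a n + b n * x}
        + (\<Sum>i\<in>{1..d n}. prob {\<omega> \<in> space M. \<bar>X n i \<omega> - Y n i \<omega>\<bar> > \<epsilon> * b n})" for n \<epsilon>
      using prob_all_le_shift[where I = "{1..d n}" and c = "a n + b n * (x - \<epsilon>)" and \<delta> = "\<epsilon> * b n",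
        OF _ Y_meas X_meas]
      by (simp add: algebra_simps abs_minus_commute)
  qed auto
qed

end
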